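(* Let $c\ge 1$ and $g\ge 2$. The free-nilpotent complex Lie algebra $N(c,g)$ admits a periodic prederivation if and only if $c\le 2$, or $c=3$ and $g=2$.
   Context: $N(c,g)$ denotes the free-nilpotent complex Lie algebra of nilpotency class $c$ on $g$ generators. A linear map $P:\mathfrak{g}\to\mathfrak{g}$ is a prederivation if $P([x,[y,z]])=[P(x),[y,z]]+[x,[P(y),z]]+[x,[y,P(z)]]$ for all $x,y,z\in\mathfrak{g}$; it is periodic if $P^m=\mathrm{id}$ for some integer $m\ge 1$. *)

theory Defs
  imports Complex_Main
begin

text \<open>Elements of the truncated free associative algebra over the letters 0..g-1:
  functions from words (nat lists) to complex coefficients; all coefficients of
  words of length greater than c are killed by the truncated product.
  N(c,g) is the Lie subalgebra (under the commutator bracket) generated by the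
  g letters. This is the free Lie algebra on g generators modulo its (c+1)-st
  lower central series term.\<close>

type_synonym tpoly = "nat list \<Rightarrow> complex"

definition tmult :: "nat \<Rightarrow> tpoly \<Rightarrow> tpoly \<Rightarrow> tpoly" where
  "tmult c a b = (\<lambda>w. if length w \<le> c
      then (\<Sum>k\<in>{0..length w}. a (take k w) * b (drop k w)) else 0)"

definition lbr :: "nat \<Rightarrow> tpoly \<Rightarrow> tpoly \<Rightarrow> tpoly" where
  "lbr c a b = (\<lambda>w. tmult c a b w - tmult c b a w)"

definition gen :: "nat \<Rightarrow> tpoly" where
  "gen i = (\<lambda>w. if w = [i] then 1 else 0)"

inductive_set freeNil :: "nat \<Rightarrow> nat \<Rightarrow> tpoly set" for c g where
  gen_in: "i < g \<Longrightarrow> gen i \<in> freeNil c g"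
| zero_in: "(\<lambda>w. 0) \<in> freeNil c g"
| add_in: "x \<in> freeNil c g \<Longrightarrow> y \<in> freeNil c g \<Longrightarrow> (\<lambda>w. x w + y w) \<in> freeNil c g"
| smult_in: "x \<in> freeNil c g \<Longrightarrow> (\<lambda>w. a * x w) \<in> freeNil c g"
| br_in: "x \<in> freeNil c g \<Longrightarrow> y \<in> freeNil c g \<Longrightarrow> lbr c x y \<in> freeNil c g"

definition prederivation :: "nat \<Rightarrow> nat \<Rightarrow> (tpoly \<Rightarrow> tpoly) \<Rightarrow> bool" where
  "prederivation c g P \<longleftrightarrow>
     (\<forall>x\<in>freeNil c g. P x \<in> freeNil c g) \<and>
     (\<forall>x\<in>freeNil c g. \<forall>y\<in>freeNil c g. \<forall>a b::complex.
        P (\<lambda>w. a * x w + b * y w) = (\<lambda>w. a * P x w + b * P y w)) \<and>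
     (\<forall>x\<in>freeNil c g. \<forall>y\<in>freeNil c g. \<forall>z\<in>freeNil c g.
        P (lbr c x (lbr c y z)) =
          (\<lambda>w. lbr c (P x) (lbr c y z) w + lbr c x (lbr c (P y) z) w
                  + lbr c x (lbr c y (P z)) w))"

definition periodic_prederivation :: "nat \<Rightarrow> nat \<Rightarrow> (tpoly \<Rightarrow> tpoly) \<Rightarrow> bool" where
  "periodic_prederivation c g P \<longleftrightarrow> prederivation c g P \<and>
     (\<exists>m::nat. m \<ge> 1 \<and> (\<forall>x\<in>freeNil c g. (P ^^ m) x = x))"

end

theory Submission
  imports Defs
begin

text \<open>Sufficiency: for \<open>c \<le> 2\<close> all double brackets vanish, so the identity is a periodic
  prederivation; for \<open>c = 3\<close>, \<open>g = 2\<close> the automorphism scaling a word by \<open>\<chi>\<close> of its letters, with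
  \<open>\<chi> 0 = \<i>\<close> and \<open>\<chi> 1 = -\<i>\<close>, is one, because \<open>\<chi> a * \<chi> b * \<chi> d = \<chi> a + \<chi> b + \<chi> d\<close> whenever the
  letters \<open>a, b, d\<close> are not all equal.

  Necessity: a periodic linear map is diagonalisable with roots of unity as eigenvalues, and a
  prederivation maps a double bracket of eigenvectors with eigenvalues \<open>a, b, d\<close> to an eigenvector
  with eigenvalue \<open>a + b + d\<close>, so \<open>|a + b + d| = 1\<close> whenever that bracket is nonzero. For unit
  \<open>a, b\<close>, \<open>|2a + b| = 1\<close> forces \<open>b = -a\<close>. Hence eigenvectors with independent linear parts have
  opposite eigenvalues once \<open>c \<ge> 3\<close>, which is impossible for three of them (\<open>g \<ge> 3\<close>). For
  \<open>g = 2\<close>, \<open>c \<ge> 4\<close>, take such \<open>u, v\<close> with eigenvalues \<open>a, -a\<close>: the quadratic part of every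
  eigencomponent of \<open>[u, v]\<close> must vanish, since otherwise \<open>[u, [u, p]]\<close> and \<open>[v, [v, p]]\<close> are
  nonzero in degree 4 and its eigenvalue would be both \<open>-a\<close> and \<open>a\<close>; yet these quadratic parts sum to
  that of \<open>[u, v]\<close>, which is nonzero.\<close>

fun conv :: "tpoly \<Rightarrow> tpoly \<Rightarrow> nat list \<Rightarrow> complex" where
  "conv a b [] = a [] * b []"
| "conv a b (l # w) = a [] * b (l # w) + conv (\<lambda>v. a (l # v)) b w"

lemma sum_take_drop_eq_conv:
  "(\<Sum>k\<in>{0..length w}. a (take k w) * b (drop k w)) = conv a b w"
proof (induction w arbitrary: a)
  case (Cons l w)
  have "(\<Sum>k\<in>{0..length (l # w)}. a (take k (l # w)) * b (drop k (l # w)))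
      = a [] * b (l # w) + (\<Sum>k\<in>{0..length w}. a (l # take k w) * b (drop k w))"
    by (simp add: atLeast0AtMost sum.atMost_Suc_shift del: sum.atMost_Suc)
  then show ?case using Cons[of "\<lambda>v. a (l # v)"] by simp
qed simp

lemma tmult_conv: "tmult c a b w = (if length w \<le> c then conv a b w else 0)"
  by (simp add: tmult_def sum_take_drop_eq_conv)

lemma lbr_conv: "lbr c a b w = (if length w \<le> c then conv a b w - conv b a w else 0)"
  by (simp add: lbr_def tmult_conv)

lemma lbr_scale_left: "lbr c (\<lambda>w. s * x w) y = (\<lambda>w. s * lbr c x y w)"
  by (rule ext) (simp add: lbr_def tmult_def sum_distrib_left algebra_simps)

lemma lbr_scale_right: "lbr c x (\<lambda>w. s * y w) = (\<lambda>w. s * lbr c x y w)"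
  by (rule ext) (simp add: lbr_def tmult_def sum_distrib_left algebra_simps)

lemma lbr_lbr_Cons3:
  assumes "3 \<le> c" "x [] = 0" "y [] = 0" "z [] = 0"
  shows "lbr c x (lbr c y z) [i, j, k]
    = x [i] * (y [j] * z [k] - z [j] * y [k]) - (y [i] * z [j] - z [i] * y [j]) * x [k]"
  using assms by (simp add: lbr_conv algebra_simps)

lemma lbr_lbr_vanish:
  assumes "x [] = 0" "y [] = 0" "z [] = 0" and "length w < 3 \<or> c < length w"
  shows "lbr c x (lbr c y z) w = 0"
proof (cases "c < length w")
  case False
  with assms(4) consider "w = []" | l where "w = [l]" | l l' where "w = [l, l']"
    by (cases w rule: remdups_adj.cases) auto
  then show ?thesis using assms(1-3) by cases (auto simp: lbr_conv)
qed (simp add: lbr_conv)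

lemma freeNil_Nil: "x \<in> freeNil c g \<Longrightarrow> x [] = 0"
  by (induction rule: freeNil.induct) (auto simp: gen_def lbr_conv)

lemma freeNil_vanish_large_letter:
  assumes "x \<in> freeNil c g" "l \<in> set w" "g \<le> l"
  shows "x w = 0"
  using assms
proof (induction arbitrary: w rule: freeNil.induct)
  case (br_in x y)
  have "l \<in> set (take k w) \<or> l \<in> set (drop k w)" for k
    using br_in.prems(1) by (metis append_take_drop_id Un_iff set_append)
  then have "u (take k w) * v (drop k w) = 0" if "u \<in> {x, y}" "v \<in> {x, y}" for u v k
    using br_in.IH br_in.prems(2) that by auto
  then show ?case by (simp add: lbr_def tmult_def del: mult_eq_0_iff)
qed (auto simp: gen_def)

lemma freeNil_antisym:
  assumes "x \<in> freeNil c g" "2 \<le> c"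
  shows "x [i, j] = - x [j, i]"
  using assms
proof (induction rule: freeNil.induct)
  case (br_in x y)
  then show ?case using freeNil_Nil[OF br_in.hyps(1)] freeNil_Nil[OF br_in.hyps(2)]
    by (simp add: lbr_conv algebra_simps)
qed (auto simp: gen_def)

lemma freeNil_lincomb:
  "finite I \<Longrightarrow> (\<And>i. i \<in> I \<Longrightarrow> f i \<in> freeNil c g) \<Longrightarrow> (\<lambda>w. \<Sum>i\<in>I. s i * f i w) \<in> freeNil c g"
proof (induction I rule: finite_induct)
  case (insert i I)
  then show ?case
    using freeNil.add_in[OF freeNil.smult_in[of "f i" c g "s i"], of "\<lambda>w. \<Sum>i\<in>I. s i * f i w"]
    by simp
qed (simp add: freeNil.zero_in)

section \<open>Periodic prederivations in classes two and three\<close>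

lemma periodic_prederivation_id:
  assumes "c \<le> 2"
  shows "periodic_prederivation c g id"
  unfolding periodic_prederivation_def prederivation_def
proof (intro conjI ballI allI)
  fix x y z assume "x \<in> freeNil c g" "y \<in> freeNil c g" "z \<in> freeNil c g"
  then have "lbr c x (lbr c y z) w = 0" for w
    using assms by (intro lbr_lbr_vanish) (auto simp: freeNil_Nil)
  then show "id (lbr c x (lbr c y z))
      = (\<lambda>w. lbr c (id x) (lbr c y z) w + lbr c x (lbr c (id y) z) w + lbr c x (lbr c y (id z)) w)"
    by auto
qed (auto intro: exI[of _ 1])

definition letter_scaling :: "(nat \<Rightarrow> complex) \<Rightarrow> tpoly \<Rightarrow> tpoly" where
  "letter_scaling \<chi> f = (\<lambda>w. prod_list (map \<chi> w) * f w)"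

lemma letter_scaling_tmult:
  "tmult c (letter_scaling \<chi> a) (letter_scaling \<chi> b) = letter_scaling \<chi> (tmult c a b)"
proof
  fix w
  have "prod_list (map \<chi> (take k w)) * prod_list (map \<chi> (drop k w)) = prod_list (map \<chi> w)" for k
    by (metis append_take_drop_id map_append prod_list.append)
  then show "tmult c (letter_scaling \<chi> a) (letter_scaling \<chi> b) w = letter_scaling \<chi> (tmult c a b) w"
    by (simp add: tmult_def letter_scaling_def sum_distrib_left mult_ac del: mult_eq_0_iff)
qed

lemma letter_scaling_lbr:
  "lbr c (letter_scaling \<chi> a) (letter_scaling \<chi> b) = letter_scaling \<chi> (lbr c a b)"
  unfolding lbr_def letter_scaling_tmult by (simp add: letter_scaling_def algebra_simps)

lemma letter_scaling_freeNil:
  "x \<in> freeNil c g \<Longrightarrow> letter_scaling \<chi> x \<in> freeNil c g"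
proof (induction rule: freeNil.induct)
  case (gen_in i)
  have "letter_scaling \<chi> (gen i) = (\<lambda>w. \<chi> i * gen i w)"
    by (auto simp: letter_scaling_def gen_def)
  then show ?case using freeNil.smult_in[OF freeNil.gen_in[OF gen_in]] by simp
next
  case (add_in x y)
  then show ?case using freeNil.add_in[OF add_in.IH]
    by (simp add: letter_scaling_def distrib_left)
next
  case (smult_in x a)
  then show ?case using freeNil.smult_in[OF smult_in.IH, of a]
    by (simp add: letter_scaling_def mult.left_commute)
next
  case (br_in x y)
  then show ?case using freeNil.br_in[OF br_in.IH] by (simp add: letter_scaling_lbr)
qed (simp add: letter_scaling_def freeNil.zero_in)

lemma funpow_letter_scaling:
  "(letter_scaling \<chi> ^^ n) f = (\<lambda>w. prod_list (map \<chi> w) ^ n * f w)"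
  by (induction n) (auto simp: letter_scaling_def)

lemma lbr_lbr_letter_scaling_Cons3:
  assumes "3 \<le> c" "x [] = 0" "y [] = 0" "z [] = 0"
  shows "lbr c (letter_scaling \<chi> x) (lbr c y z) [a, b, d]
       + lbr c x (lbr c (letter_scaling \<chi> y) z) [a, b, d]
       + lbr c x (lbr c y (letter_scaling \<chi> z)) [a, b, d]
     = (\<chi> a + \<chi> b + \<chi> d) * lbr c x (lbr c y z) [a, b, d]"
  using assms by (simp add: lbr_lbr_Cons3 letter_scaling_def algebra_simps)

definition chi :: "nat \<Rightarrow> complex" where
  "chi l = (if l = 0 then \<i> else - \<i>)"

lemma chi_prod_eq_sum:
  assumes "a < 2" "b < 2" "d < 2" "\<not> (a = b \<and> b = d)"
  shows "chi a * chi b * chi d = chi a + chi b + chi d"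
  using assms by (auto simp: chi_def less_2_cases_iff)

lemma chi_prod_mult_lbr_lbr:
  assumes "3 \<le> c" "x \<in> freeNil c 2" "y \<in> freeNil c 2" "z \<in> freeNil c 2"
  shows "chi a * chi b * chi d * lbr c x (lbr c y z) [a, b, d]
       = (chi a + chi b + chi d) * lbr c x (lbr c y z) [a, b, d]"
proof (cases "a < 2 \<and> b < 2 \<and> d < 2 \<and> \<not> (a = b \<and> b = d)")
  case True
  then show ?thesis using chi_prod_eq_sum by simp
next
  case False
  have "lbr c x (lbr c y z) [a, b, d] = 0"
  proof (cases "a = b \<and> b = d")
    case True
    then show ?thesis using assms by (simp add: lbr_lbr_Cons3 freeNil_Nil)
  next
    case False
    with \<open>\<not> (a < 2 \<and> _)\<close> have "\<exists>l\<in>set [a, b, d]. 2 \<le> l" by auto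
    then show ?thesis using freeNil_vanish_large_letter assms(2-4) by (metis freeNil.br_in)
  qed
  then show ?thesis by simp
qed

lemma periodic_prederivation_letter_scaling:
  "periodic_prederivation 3 2 (letter_scaling chi)"
  unfolding periodic_prederivation_def prederivation_def
proof (intro conjI ballI allI)
  have "prod_list (map chi w) ^ 4 = 1" for w
    by (induction w) (simp_all add: chi_def power_mult_distrib)
  then show "\<exists>m\<ge>1. \<forall>x\<in>freeNil 3 2. (letter_scaling chi ^^ m) x = x"
    by (intro exI[of _ 4]) (simp add: funpow_letter_scaling)
next
  fix x y z assume xyz: "x \<in> freeNil 3 2" "y \<in> freeNil 3 2" "z \<in> freeNil 3 2"
  let ?S = "letter_scaling chi"
  have nil: "x [] = 0" "y [] = 0" "z [] = 0"
    using xyz by (simp_all add: freeNil_Nil)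
  show "?S (lbr 3 x (lbr 3 y z))
      = (\<lambda>w. lbr 3 (?S x) (lbr 3 y z) w + lbr 3 x (lbr 3 (?S y) z) w + lbr 3 x (lbr 3 y (?S z)) w)"
  proof
    fix w :: "nat list"
    show "?S (lbr 3 x (lbr 3 y z)) w
        = lbr 3 (?S x) (lbr 3 y z) w + lbr 3 x (lbr 3 (?S y) z) w + lbr 3 x (lbr 3 y (?S z)) w"
    proof (cases "length w = 3")
      case False
      then have "length w < 3 \<or> 3 < length w" by linarith
      then have "lbr 3 u (lbr 3 v t) w = 0" if "u [] = 0" "v [] = 0" "t [] = 0" for u v t
        using that by (intro lbr_lbr_vanish)
      then show ?thesis using nil by (simp add: letter_scaling_def)
    next
      case True
      then obtain a b d where w: "w = [a, b, d]"
        by (cases w rule: remdups_adj.cases) (auto simp: length_Suc_conv)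
      have "chi a * chi b * chi d * lbr 3 x (lbr 3 y z) [a, b, d]
          = (chi a + chi b + chi d) * lbr 3 x (lbr 3 y z) [a, b, d]"
        using xyz by (intro chi_prod_mult_lbr_lbr) auto
      then show ?thesis
        using lbr_lbr_letter_scaling_Cons3[of 3 x y z chi a b d] nil
        by (simp add: w letter_scaling_def mult.assoc)
    qed
  qed
qed (auto simp: letter_scaling_freeNil, simp add: letter_scaling_def algebra_simps)

section \<open>Spectral decomposition of a periodic linear map\<close>

lemma sum_roots_unity_power:
  assumes "0 < k" "k < m"
  shows "(\<Sum>z\<in>{z::complex. z ^ m = 1}. z ^ k) = 0"
proof -
  have m: "0 < m" using assms by simp
  define \<omega> where "\<omega> = cis (2 * pi * real k / real m)"
  have "\<omega> \<noteq> 1"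
  proof
    assume "\<omega> = 1"
    then have "cis (2 * pi * real k / real m) = cis (2 * pi * real 0 / real m)" by (simp add: \<omega>_def)
    with bij_betw_roots_unity[OF m] assms have "k = 0" unfolding bij_betw_def inj_on_def by auto
    with assms show False by simp
  qed
  have "(\<Sum>z\<in>{z::complex. z ^ m = 1}. z ^ k) = (\<Sum>i<m. cis (2 * pi * real i / real m) ^ k)"
    using m by (intro sum.reindex_bij_betw [symmetric] bij_betw_roots_unity) auto
  also have "\<dots> = (\<Sum>i<m. \<omega> ^ i)"
    by (intro sum.cong refl) (auto simp: \<omega>_def DeMoivre mult_ac)
  also have "\<dots> = (\<omega> ^ m - 1) / (\<omega> - 1)"
    using \<open>\<omega> \<noteq> 1\<close> by (subst geometric_sum) auto
  also have "\<omega> ^ m = 1" using m by (simp add: \<omega>_def DeMoivre cis_multiple_2pi)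
  finally show ?thesis by simp
qed

lemma sum_lessThan_Suc_shift_cyclic:
  fixes f :: "nat \<Rightarrow> 'a::ab_group_add"
  assumes "f m = f 0"
  shows "(\<Sum>j<m. f (Suc j)) = (\<Sum>j<m. f j)"
  using sum.lessThan_Suc_shift[of f m] sum.lessThan_Suc[of f m] assms by (simp add: add.commute)

locale periodic_linear_map =
  fixes c g :: nat and P :: "tpoly \<Rightarrow> tpoly" and m :: nat
  assumes maps_freeNil: "x \<in> freeNil c g \<Longrightarrow> P x \<in> freeNil c g"
    and map_lincomb: "x \<in> freeNil c g \<Longrightarrow> y \<in> freeNil c g \<Longrightarrow>
        P (\<lambda>w. a * x w + b * y w) = (\<lambda>w. a * P x w + b * P y w)"
    and period_pos: "1 \<le> m"
    and periodic: "x \<in> freeNil c g \<Longrightarrow> (P ^^ m) x = x"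
begin

abbreviation L :: "tpoly set" where "L \<equiv> freeNil c g"

definition roots :: "complex set" where "roots = {z. z ^ m = 1}"

lemma finite_roots: "finite roots"
  unfolding roots_def using finite_roots_unity[OF period_pos] by simp

lemma norm_root:
  assumes "z \<in> roots"
  shows "norm z = 1"
proof -
  have "norm z ^ m = 1 ^ m" using assms by (simp add: roots_def flip: norm_power)
  then show ?thesis using period_pos power_eq_iff_eq_base[of m "norm z" 1] by simp
qed

lemma map_scale: "x \<in> L \<Longrightarrow> P (\<lambda>w. a * x w) = (\<lambda>w. a * P x w)"
  using map_lincomb[of x x a 0] by simp

lemma map_sum:
  "finite I \<Longrightarrow> (\<And>i. i \<in> I \<Longrightarrow> f i \<in> L) \<Longrightarrow>
   P (\<lambda>w. \<Sum>i\<in>I. s i * f i w) = (\<lambda>w. \<Sum>i\<in>I. s i * P (f i) w)"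
proof (induction I rule: finite_induct)
  case empty
  then show ?case using map_scale[OF freeNil.zero_in, of 0] by simp
next
  case (insert i I)
  then have "(\<lambda>w. \<Sum>i\<in>I. s i * f i w) \<in> L" by (intro freeNil_lincomb) auto
  then show ?case using insert map_lincomb[of "f i" "\<lambda>w. \<Sum>i\<in>I. s i * f i w" "s i" 1] by simp
qed

lemma funpow_maps_freeNil: "x \<in> L \<Longrightarrow> (P ^^ j) x \<in> L"
  by (induction j) (auto intro: maps_freeNil)

definition eigenvector :: "complex \<Rightarrow> tpoly \<Rightarrow> bool" where
  "eigenvector s x \<longleftrightarrow> x \<in> L \<and> P x = (\<lambda>w. s * x w)"

lemma eigenvector_in_freeNil: "eigenvector s x \<Longrightarrow> x \<in> L"
  by (simp add: eigenvector_def)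

lemma eigenvector_Nil: "eigenvector s x \<Longrightarrow> x [] = 0"
  by (auto simp: eigenvector_def freeNil_Nil)

text \<open>The projection \<open>(1/m) \<Sum>\<^sub>j z\<^sup>-\<^sup>j P\<^sup>j x\<close> onto the \<open>z\<close>-eigenspace, written with
  \<open>z\<^sup>m\<^sup>-\<^sup>j = z\<^sup>-\<^sup>j\<close>.\<close>
definition component :: "complex \<Rightarrow> tpoly \<Rightarrow> tpoly" where
  "component z x = (\<lambda>w. \<Sum>j<m. z ^ (m - j) / of_nat m * (P ^^ j) x w)"

lemma component_eigenvector:
  assumes z: "z \<in> roots" and x: "x \<in> L"
  shows "eigenvector z (component z x)"
proof -
  have "P (component z x) w = z * component z x w" for w
  proof -
    define f where "f j = z ^ (Suc m - j) / of_nat m * (P ^^ j) x w" for j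
    have "P (component z x) w = (\<Sum>j<m. f (Suc j))"
      using map_sum[of "{..<m}" "\<lambda>j. (P ^^ j) x" "\<lambda>j. z ^ (m - j) / of_nat m"] x
      by (simp add: component_def f_def funpow_maps_freeNil)
    also have "\<dots> = (\<Sum>j<m. f j)"
      using z periodic[OF x] by (intro sum_lessThan_Suc_shift_cyclic) (simp add: f_def roots_def)
    also have "\<dots> = z * component z x w"
      unfolding component_def f_def sum_distrib_left
      by (intro sum.cong refl) (simp add: Suc_diff_le less_imp_le)
    finally show ?thesis .
  qed
  moreover have "component z x \<in> L"
    unfolding component_def using x by (intro freeNil_lincomb funpow_maps_freeNil) auto
  ultimately show ?thesis unfolding eigenvector_def by auto
qed

lemma sum_components:
  assumes "x \<in> L"
  shows "(\<Sum>z\<in>roots. component z x w) = x w"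
proof -
  have coeff: "(\<Sum>z\<in>roots. z ^ (m - j)) / of_nat m = (if j = 0 then 1 else 0)" if "j < m" for j
    using that period_pos card_roots_unity_eq[of m]
    by (auto simp: roots_def sum_roots_unity_power)
  have "(\<Sum>z\<in>roots. component z x w) = (\<Sum>j<m. (\<Sum>z\<in>roots. z ^ (m - j)) / of_nat m * (P ^^ j) x w)"
    unfolding component_def by (simp add: sum.swap[of _ roots] sum_distrib_right sum_divide_distrib)
  also have "\<dots> = (\<Sum>j<m. if j = 0 then x w else 0)"
    by (intro sum.cong refl) (simp add: coeff)
  finally show ?thesis using period_pos by simp
qed

lemma eigenvalue_root:
  assumes "eigenvector s x" "x w \<noteq> 0"
  shows "s \<in> roots"
proof -
  have "(P ^^ j) x = (\<lambda>w. s ^ j * x w)" for j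
    using assms(1) by (induction j) (auto simp: eigenvector_def map_scale)
  then have "x w = s ^ m * x w"
    using periodic assms(1) unfolding eigenvector_def by metis
  then show ?thesis using assms(2) by (simp add: roots_def)
qed

end

section \<open>Eigenvalues of a periodic prederivation\<close>

lemma eq_neg_if_norm_double_add_eq_1:
  fixes a b :: complex
  assumes "norm a = 1" "norm b = 1" "norm (a + a + b) = 1"
  shows "b = - a"
proof -
  obtain p q r s where ab: "a = Complex p q" "b = Complex r s" by (metis complex.exhaust)
  have "p\<^sup>2 + q\<^sup>2 = 1" "r\<^sup>2 + s\<^sup>2 = 1" "(2 * p + r)\<^sup>2 + (2 * q + s)\<^sup>2 = 1"
    using assms ab by (simp_all add: norm_complex_def)
  then have "(p + r)\<^sup>2 + (q + s)\<^sup>2 = 0" by (simp add: power2_eq_square algebra_simps)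
  then have "p + r = 0" "q + s = 0" by (simp_all add: sum_power2_eq_zero_iff)
  then show ?thesis using ab by (simp add: complex_eq_iff)
qed

definition minor :: "tpoly \<Rightarrow> tpoly \<Rightarrow> nat \<Rightarrow> nat \<Rightarrow> complex" where
  "minor x y i j = x [i] * y [j] - x [j] * y [i]"

definition det3 :: "tpoly \<Rightarrow> tpoly \<Rightarrow> tpoly \<Rightarrow> complex" where
  "det3 x y z = x [0] * y [1] * z [2] - x [0] * y [2] * z [1] - x [1] * y [0] * z [2]
     + x [1] * y [2] * z [0] + x [2] * y [0] * z [1] - x [2] * y [1] * z [0]"

lemma det3_swap: "det3 y x z = - det3 x y z"
  by (simp add: det3_def algebra_simps)

lemma det3_rotate: "det3 y z x = det3 x y z"
  by (simp add: det3_def algebra_simps)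

lemma minor_nonzero_if_det3_nonzero:
  assumes "det3 x y z \<noteq> 0"
  shows "\<exists>i j. minor x y i j \<noteq> 0"
proof -
  have "det3 x y z = z [2] * minor x y 0 1 - z [1] * minor x y 0 2 + z [0] * minor x y 1 2"
    by (simp add: det3_def minor_def algebra_simps)
  then show ?thesis using assms by (metis add_0 diff_zero mult_zero_right)
qed

lemma sum_eq_0_singleton_support:
  fixes f :: "'a \<Rightarrow> 'b::comm_monoid_add"
  assumes "finite A" "(\<Sum>x\<in>A. f x) = 0" "\<And>x. x \<in> A \<Longrightarrow> f x \<noteq> 0 \<Longrightarrow> x = k" "x \<in> A"
  shows "f x = 0"
proof -
  have "(\<Sum>x\<in>A. f x) = (\<Sum>x\<in>A \<inter> {k}. f x)"
    using assms by (intro sum.mono_neutral_right) auto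
  then show "f x = 0" using assms by (cases "k \<in> A") (auto simp: Int_absorb2)
qed

locale periodic_prederivation_map = periodic_linear_map +
  assumes prederivation_rule: "x \<in> freeNil c g \<Longrightarrow> y \<in> freeNil c g \<Longrightarrow> z \<in> freeNil c g \<Longrightarrow>
    P (lbr c x (lbr c y z)) =
      (\<lambda>w. lbr c (P x) (lbr c y z) w + lbr c x (lbr c (P y) z) w + lbr c x (lbr c y (P z)) w)"
begin

lemma eigenvector_lbr_lbr:
  assumes "eigenvector a x" "eigenvector b y" "eigenvector d z"
  shows "eigenvector (a + b + d) (lbr c x (lbr c y z))"
proof -
  have L: "x \<in> L" "y \<in> L" "z \<in> L"
    and P: "P x = (\<lambda>w. a * x w)" "P y = (\<lambda>w. b * y w)" "P z = (\<lambda>w. d * z w)"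
    using assms by (auto simp: eigenvector_def)
  have "P (lbr c x (lbr c y z)) = (\<lambda>w. (a + b + d) * lbr c x (lbr c y z) w)"
    using prederivation_rule[OF L] by (simp add: P lbr_scale_left lbr_scale_right algebra_simps)
  then show ?thesis using L by (simp add: eigenvector_def freeNil.br_in)
qed

lemma eigenvalue_eq_neg_if_lbr_lbr_nonzero:
  assumes "eigenvector a u" "eigenvector b v" "a \<in> roots" "b \<in> roots"
    and "lbr c u (lbr c u v) w \<noteq> 0"
  shows "b = - a"
proof -
  have "a + a + b \<in> roots"
    using eigenvector_lbr_lbr[OF assms(1,1,2)] assms(5) by (rule eigenvalue_root)
  then show ?thesis using assms(3,4) by (intro eq_neg_if_norm_double_add_eq_1) (auto simp: norm_root)
qed

lemma eigenvalue_eq_neg_if_minor_nonzero: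
  assumes "3 \<le> c" "eigenvector a u" "eigenvector b v" "a \<in> roots" "b \<in> roots"
    and "minor u v i j \<noteq> 0"
  shows "b = - a"
proof -
  have "u [] = 0" "v [] = 0" using assms(2,3) by (simp_all add: eigenvector_Nil)
  then have "lbr c u (lbr c u v) [i, i, j] = u [i] * minor u v i j"
    "lbr c u (lbr c u v) [j, j, i] = - u [j] * minor u v i j"
    using assms(1) by (simp_all add: lbr_lbr_Cons3 minor_def algebra_simps)
  moreover have "u [i] \<noteq> 0 \<or> u [j] \<noteq> 0" using assms(6) by (auto simp: minor_def)
  ultimately obtain w where "lbr c u (lbr c u v) w \<noteq> 0"
    using assms(6) by (metis mult_eq_0_iff neg_equal_0_iff_equal)
  then show ?thesis by (rule eigenvalue_eq_neg_if_lbr_lbr_nonzero[OF assms(2-5)])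
qed

lemma exists_components_minor_nonzero:
  assumes "2 \<le> g"
  shows "\<exists>a\<in>roots. \<exists>b\<in>roots. minor (component a (gen 0)) (component b (gen 1)) 0 1 \<noteq> 0"
proof (rule ccontr)
  assume "\<not> ?thesis"
  then have "(\<Sum>a\<in>roots. \<Sum>b\<in>roots. minor (component a (gen 0)) (component b (gen 1)) 0 1) = 0"
    by simp
  moreover have "gen 0 \<in> L" "gen 1 \<in> L" using assms by (auto intro: freeNil.gen_in)
  ultimately show False
    by (simp add: minor_def sum_subtractf sum_product[symmetric] sum_components gen_def)
qed

lemma exists_components_det3_nonzero:
  assumes "3 \<le> g"
  shows "\<exists>a\<in>roots. \<exists>b\<in>roots. \<exists>d\<in>roots.
    det3 (component a (gen 0)) (component b (gen 1)) (component d (gen 2)) \<noteq> 0"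
proof (rule ccontr)
  assume none: "\<not> ?thesis"
  define X Y Z where "X a = component a (gen 0)" and "Y a = component a (gen 1)"
    and "Z a = component a (gen 2)" for a
  have "(\<Sum>a\<in>roots. \<Sum>b\<in>roots. \<Sum>d\<in>roots. X a [i] * Y b [j] * Z d [k])
      = (\<Sum>a\<in>roots. X a [i]) * (\<Sum>b\<in>roots. Y b [j]) * (\<Sum>d\<in>roots. Z d [k])" for i j k
  proof -
    have "X a [i] * ((\<Sum>b\<in>roots. Y b [j]) * (\<Sum>d\<in>roots. Z d [k]))
        = (\<Sum>b\<in>roots. \<Sum>d\<in>roots. X a [i] * (Y b [j] * Z d [k]))" for a
      unfolding sum_product by (simp only: sum_distrib_left)
    then show ?thesis by (simp add: sum_distrib_right mult.assoc)
  qed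
  then have "(\<Sum>a\<in>roots. \<Sum>b\<in>roots. \<Sum>d\<in>roots. det3 (X a) (Y b) (Z d))
      = det3 (\<lambda>w. \<Sum>a\<in>roots. X a w) (\<lambda>w. \<Sum>b\<in>roots. Y b w) (\<lambda>w. \<Sum>d\<in>roots. Z d w)"
    unfolding det3_def by (simp only: sum_subtractf sum.distrib)
  also have "\<dots> = det3 (gen 0) (gen 1) (gen 2)"
    using assms by (simp add: X_def Y_def Z_def sum_components freeNil.gen_in)
  also have "\<dots> = 1" by (simp add: gen_def det3_def)
  finally show False using none by (simp add: X_def Y_def Z_def)
qed

lemma class_le_2_if_3_le_generators:
  assumes "3 \<le> g"
  shows "c \<le> 2"
proof (rule ccontr)
  assume "\<not> c \<le> 2"
  then have c: "3 \<le> c" by simp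
  obtain a b d where roots: "a \<in> roots" "b \<in> roots" "d \<in> roots"
    and det: "det3 (component a (gen 0)) (component b (gen 1)) (component d (gen 2)) \<noteq> 0"
    using exists_components_det3_nonzero[OF assms] by blast
  have "gen 0 \<in> L" "gen 1 \<in> L" "gen 2 \<in> L" using assms by (auto intro: freeNil.gen_in)
  then have eig: "eigenvector a (component a (gen 0))" "eigenvector b (component b (gen 1))"
    "eigenvector d (component d (gen 2))" using roots by (auto intro: component_eigenvector)
  from det have "det3 (component a (gen 0)) (component d (gen 2)) (component b (gen 1)) \<noteq> 0"
    "det3 (component b (gen 1)) (component d (gen 2)) (component a (gen 0)) \<noteq> 0"
    by (metis det3_rotate det3_swap neg_0_equal_iff_equal)+
  with det obtain i j i' j' i'' j'' where
    "minor (component a (gen 0)) (component b (gen 1)) i j \<noteq> 0"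
    "minor (component a (gen 0)) (component d (gen 2)) i' j' \<noteq> 0"
    "minor (component b (gen 1)) (component d (gen 2)) i'' j'' \<noteq> 0"
    by (metis minor_nonzero_if_det3_nonzero)
  then have "b = - a" "d = - a" "d = - b"
    using eigenvalue_eq_neg_if_minor_nonzero[OF c] eig roots by blast+
  then have "a = 0" by simp
  then show False using norm_root[OF roots(1)] by simp
qed

lemma linear_part_of_bracket_components_vanish:
  assumes "3 \<le> c" "eigenvector a u" "eigenvector b v" "a \<in> roots" "b \<in> roots"
    and "minor u v 0 1 \<noteq> 0" "z \<in> roots"
  shows "component z (lbr c u v) [0] = 0 \<and> component z (lbr c u v) [1] = 0"
proof -
  define p where "p z = component z (lbr c u v)" for z
  have uv: "u \<in> L" "v \<in> L" "u [] = 0" "v [] = 0"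
    using assms(2,3) by (simp_all add: eigenvector_in_freeNil eigenvector_Nil)
  then have sum_p: "(\<Sum>z\<in>roots. p z [k]) = 0" for k
    using sum_components[of "lbr c u v"] assms(1) by (simp add: p_def freeNil.br_in lbr_conv)
  have "minor e (p z) 0 1 = 0" if "eigenvector s e" "s \<in> roots" for e s
  proof (rule sum_eq_0_singleton_support[OF finite_roots _ _ assms(7)])
    show "(\<Sum>z\<in>roots. minor e (p z) 0 1) = 0"
      by (simp add: minor_def sum_subtractf sum_distrib_left[symmetric] sum_p)
    show "z = - s" if "z \<in> roots" "minor e (p z) 0 1 \<noteq> 0" for z
    proof -
      have "eigenvector z (p z)"
        using component_eigenvector[OF that(1)] uv by (simp add: p_def freeNil.br_in)
      from eigenvalue_eq_neg_if_minor_nonzero[OF assms(1) \<open>eigenvector s e\<close> this \<open>s \<in> roots\<close> that]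
      show ?thesis .
    qed
  qed
  then have "minor u (p z) 0 1 = 0" "minor v (p z) 0 1 = 0"
    using assms(2-5) by blast+
  moreover have "p z [0] * minor u v 0 1 = v [0] * minor u (p z) 0 1 - u [0] * minor v (p z) 0 1"
    "p z [1] * minor u v 0 1 = v [1] * minor u (p z) 0 1 - u [1] * minor v (p z) 0 1"
    by (simp_all add: minor_def algebra_simps)
  ultimately show ?thesis using assms(6) by (simp add: p_def)
qed

lemma eigenvector_quadratic_part_vanish:
  assumes "4 \<le> c" "eigenvector a u" "eigenvector b v" "a \<in> roots" "b \<in> roots" "a \<noteq> b"
    and "minor u v 0 1 \<noteq> 0" "eigenvector z p" "z \<in> roots" "p [0] = 0" "p [1] = 0"
  shows "p [0, 1] = 0"
proof (rule ccontr)
  assume p01: "p [0, 1] \<noteq> 0"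
  have pL: "p \<in> L" using assms(8) by (rule eigenvector_in_freeNil)
  have anti: "p [i, j] = - p [j, i]" for i j
    by (rule freeNil_antisym[OF pL]) (use assms(1) in simp)
  have p: "p [] = 0" "p [0, 0] = 0" "p [1, 1] = 0" "p [1, 0] = - p [0, 1]"
    using freeNil_Nil[OF pL] anti[of 0 0] anti[of 1 1] anti[of 1 0] by simp_all
  have opposite: "z = - s"
    if e: "eigenvector s e" "s \<in> roots" and nz: "e [0] \<noteq> 0 \<or> e [1] \<noteq> 0" for s e
  proof -
    have "e [] = 0" using e(1) by (rule eigenvector_Nil)
    then have "lbr c e (lbr c e p) [0, 0, 0, 1] = e [0] * e [0] * p [0, 1]"
      "lbr c e (lbr c e p) [1, 1, 1, 0] = - e [1] * e [1] * p [0, 1]"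
      using assms(1,10,11) p by (simp_all add: lbr_conv algebra_simps)
    then obtain w where "lbr c e (lbr c e p) w \<noteq> 0"
      using nz p01 by (metis mult_eq_0_iff neg_equal_0_iff_equal)
    then show ?thesis by (rule eigenvalue_eq_neg_if_lbr_lbr_nonzero[OF e(1) assms(8) e(2) assms(9)])
  qed
  have "u [0] \<noteq> 0 \<or> u [1] \<noteq> 0" "v [0] \<noteq> 0 \<or> v [1] \<noteq> 0"
    using assms(7) by (auto simp: minor_def)
  then have "z = - a" "z = - b"
    using opposite assms(2-5) by blast+
  then show False using assms(6) by simp
qed

lemma class_le_3_if_2_generators:
  assumes "g = 2"
  shows "c \<le> 3"
proof (rule ccontr)
  assume "\<not> c \<le> 3"
  then have c: "4 \<le> c" by simp
  obtain a b where roots: "a \<in> roots" "b \<in> roots"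
    and minor: "minor (component a (gen 0)) (component b (gen 1)) 0 1 \<noteq> 0"
    using exists_components_minor_nonzero assms by auto
  define u v where "u = component a (gen 0)" and "v = component b (gen 1)"
  have "gen 0 \<in> L" "gen 1 \<in> L" using assms by (auto intro: freeNil.gen_in)
  then have eig: "eigenvector a u" "eigenvector b v"
    using roots by (auto simp: u_def v_def intro: component_eigenvector)
  have "b = - a"
    using eigenvalue_eq_neg_if_minor_nonzero c eig roots minor by (simp add: u_def v_def)
  then have "a \<noteq> b" using norm_root[OF roots(1)] by auto
  have uv: "lbr c u v \<in> L" "u [] = 0" "v [] = 0"
    using eig by (simp_all add: eigenvector_in_freeNil eigenvector_Nil freeNil.br_in)
  have "component z (lbr c u v) [0, 1] = 0" if "z \<in> roots" for z
    using eigenvector_quadratic_part_vanish[OF c eig roots \<open>a \<noteq> b\<close> _ component_eigenvector[OF that uv(1)] that]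
      linear_part_of_bracket_components_vanish[OF _ eig roots _ that] minor c
    by (simp add: u_def v_def)
  then have "lbr c u v [0, 1] = 0" using sum_components[OF uv(1), of "[0, 1]"] by simp
  then show False using minor c uv by (simp add: u_def v_def lbr_conv minor_def algebra_simps)
qed

end

lemma periodic_prederivation_map_if_periodic_prederivation:
  assumes "periodic_prederivation c g P"
  obtains m where "periodic_prederivation_map c g P m"
proof -
  from assms obtain m where "prederivation c g P" "1 \<le> m" "\<forall>x\<in>freeNil c g. (P ^^ m) x = x"
    unfolding periodic_prederivation_def by blast
  then have "periodic_prederivation_map c g P m"
    unfolding prederivation_def by unfold_locales auto
  then show thesis by (rule that)
qed

theorem corollary5p20:
  fixes c g :: nat
  assumes "c \<ge> 1" and "g \<ge> 2"
  shows "(\<exists>P. periodic_prederivation c g P) \<longleftrightarrow> (c \<le> 2 \<or> (c = 3 \<and> g = 2))"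
proof
  assume "\<exists>P. periodic_prederivation c g P"
  then obtain P m where "periodic_prederivation_map c g P m"
    using periodic_prederivation_map_if_periodic_prederivation by metis
  then interpret periodic_prederivation_map c g P m .
  show "c \<le> 2 \<or> (c = 3 \<and> g = 2)"
    using class_le_2_if_3_le_generators class_le_3_if_2_generators assms(2)
    by (cases "g = 2") auto
next
  assume "c \<le> 2 \<or> (c = 3 \<and> g = 2)"
  then show "\<exists>P. periodic_prederivation c g P"
    using periodic_prederivation_id periodic_prederivation_letter_scaling by blast
qed

end
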